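(* Let $R$ be a ring (associative with identity $1\neq 0$) which is right almost perfect and is not a prime ring. Then $R$ is right perfect.
   Context: A ring $R$ is called right almost perfect if $R/I$ is a right perfect ring for every two-sided ideal $I$ of $R$ with $I\neq 0$ and $I\neq R$. A ring is prime if for two-sided ideals $I,J$, $IJ=0$ implies $I=0$ or $J=0$. *)

theory Defs
  imports "HOL-Algebra.QuotRing" "HOL-Algebra.Ideal_Product"
begin

text \<open>Rings are HOL-Algebra rings (associative, with identity, not necessarily
commutative).  HOL-Algebra's ideal is a two-sided ideal.\<close>

definition right_ideal :: "('a, 'b) ring_scheme \<Rightarrow> 'a set \<Rightarrow> bool" where
  "right_ideal R I \<longleftrightarrow> additive_subgroup I R \<and>
     (\<forall>a\<in>I. \<forall>r\<in>carrier R. a \<otimes>\<^bsub>R\<^esub> r \<in> I)"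

definition maximal_right_ideal :: "('a, 'b) ring_scheme \<Rightarrow> 'a set \<Rightarrow> bool" where
  "maximal_right_ideal R M \<longleftrightarrow> right_ideal R M \<and> M \<noteq> carrier R \<and>
     (\<forall>I. right_ideal R I \<and> M \<subseteq> I \<longrightarrow> I = M \<or> I = carrier R)"

definition jacobson :: "('a, 'b) ring_scheme \<Rightarrow> 'a set" where
  "jacobson R = carrier R \<inter> \<Inter>{M. maximal_right_ideal R M}"

definition semisimple_ring :: "('a, 'b) ring_scheme \<Rightarrow> bool" where
  "semisimple_ring R \<longleftrightarrow> (\<forall>I. right_ideal R I \<longrightarrow>
     (\<exists>K. right_ideal R K \<and> I \<inter> K = {\<zero>\<^bsub>R\<^esub>} \<and> I <+>\<^bsub>R\<^esub> K = carrier R))"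

fun rev_prod :: "('a, 'b) ring_scheme \<Rightarrow> (nat \<Rightarrow> 'a) \<Rightarrow> nat \<Rightarrow> 'a" where
  "rev_prod R a 0 = a 0"
| "rev_prod R a (Suc n) = a (Suc n) \<otimes>\<^bsub>R\<^esub> rev_prod R a n"

text \<open>T-nilpotency condition relevant for right perfect rings: for every sequence
a_0, a_1, ... in I, some product a_n ... a_1 a_0 vanishes (equivalently, MI \<noteq> M
for every nonzero right module M).\<close>
definition T_nilpotent_for_right :: "('a, 'b) ring_scheme \<Rightarrow> 'a set \<Rightarrow> bool" where
  "T_nilpotent_for_right R I \<longleftrightarrow>
     (\<forall>a. (\<forall>n. a n \<in> I) \<longrightarrow> (\<exists>n. rev_prod R a n = \<zero>\<^bsub>R\<^esub>))"

text \<open>Bass: R is right perfect iff R/J(R) is semisimple and J(R) is T-nilpotent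
(in the sense relevant for right modules).\<close>
definition right_perfect :: "('a, 'b) ring_scheme \<Rightarrow> bool" where
  "right_perfect R \<longleftrightarrow> semisimple_ring (R Quot (jacobson R)) \<and>
     T_nilpotent_for_right R (jacobson R)"

definition right_almost_perfect :: "('a, 'b) ring_scheme \<Rightarrow> bool" where
  "right_almost_perfect R \<longleftrightarrow> (\<forall>I. ideal I R \<and> I \<noteq> {\<zero>\<^bsub>R\<^esub>} \<and> I \<noteq> carrier R
     \<longrightarrow> right_perfect (R Quot I))"

definition prime_ring :: "('a, 'b) ring_scheme \<Rightarrow> bool" where
  "prime_ring R \<longleftrightarrow> (\<forall>I J. ideal I R \<longrightarrow> ideal J R \<longrightarrow>
     I \<cdot>\<^bsub>R\<^esub> J = {\<zero>\<^bsub>R\<^esub>} \<longrightarrow> I = {\<zero>\<^bsub>R\<^esub>} \<or> J = {\<zero>\<^bsub>R\<^esub>})"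

end

theory Submission
  imports Defs
begin

text \<open>
  A non-prime ring has nonzero ideals \<open>I\<close>, \<open>J\<close> with \<open>IJ = 0\<close>; both are proper, so
  \<open>R/I\<close> and \<open>R/J\<close> are right perfect. A maximal right ideal \<open>M\<close> not containing \<open>I\<close>
  satisfies \<open>M + I = R\<close>, and writing \<open>1 = m + i\<close> gives \<open>J = (m + i)J \<subseteq> M\<close>. Hence \<open>J(R)\<close>
  is the intersection of the preimages \<open>X\<close>, \<open>Y\<close> of \<open>J(R/I)\<close> and \<open>J(R/J)\<close>.

  The right ideals of \<open>R\<close> above \<open>X\<close> correspond to those of \<open>R/I\<close> above \<open>J(R/I)\<close>, so they
  are complemented modulo \<open>X\<close>; likewise for \<open>Y\<close>, and by a modular-law argument also
  modulo \<open>X \<inter> Y = J(R)\<close>, i.e. \<open>R/J(R)\<close> is semisimple. For T-nilpotency, a sequence in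
  \<open>J(R)\<close> maps into \<open>J(R/J)\<close> and \<open>J(R/I)\<close>, so some initial product lies in \<open>J\<close> and some
  product of the following terms lies in \<open>I\<close>; together they multiply to \<open>0\<close>.
\<close>

no_notation Sum_Type.Plus (infixr \<open><+>\<close> 65)

context ring
begin

lemma right_idealI:
  assumes "I \<subseteq> carrier R" "\<zero> \<in> I" "\<And>a b. a \<in> I \<Longrightarrow> b \<in> I \<Longrightarrow> a \<oplus> b \<in> I"
    "\<And>a. a \<in> I \<Longrightarrow> \<ominus> a \<in> I" "\<And>a r. a \<in> I \<Longrightarrow> r \<in> carrier R \<Longrightarrow> a \<otimes> r \<in> I"
  shows "right_ideal R I"
  unfolding right_ideal_def
proof (intro conjI ballI)
  show "additive_subgroup I R"
    by (rule additive_subgroupI, rule add.subgroupI) (use assms in \<open>auto simp: a_inv_def[symmetric]\<close>)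
qed (use assms in auto)

lemma right_ideal_additive_subgroup: "right_ideal R I \<Longrightarrow> additive_subgroup I R"
  unfolding right_ideal_def by blast

lemma
  assumes "right_ideal R I"
  shows right_ideal_subset: "I \<subseteq> carrier R"
    and right_ideal_zero: "\<zero> \<in> I"
    and right_ideal_add: "a \<in> I \<Longrightarrow> b \<in> I \<Longrightarrow> a \<oplus> b \<in> I"
    and right_ideal_a_inv: "a \<in> I \<Longrightarrow> \<ominus> a \<in> I"
    and right_ideal_minus: "a \<in> I \<Longrightarrow> b \<in> I \<Longrightarrow> a \<ominus> b \<in> I"
    and right_ideal_mult: "a \<in> I \<Longrightarrow> r \<in> carrier R \<Longrightarrow> a \<otimes> r \<in> I"
proof -
  interpret additive_subgroup I R
    using right_ideal_additive_subgroup[OF assms] .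
  show "I \<subseteq> carrier R" "\<zero> \<in> I" by (fact a_subset, fact zero_closed)
  show "a \<in> I \<Longrightarrow> b \<in> I \<Longrightarrow> a \<oplus> b \<in> I" by (fact a_closed)
  show "a \<in> I \<Longrightarrow> \<ominus> a \<in> I" by (fact a_inv_closed)
  show "a \<in> I \<Longrightarrow> b \<in> I \<Longrightarrow> a \<ominus> b \<in> I" by (simp add: a_minus_def a_closed a_inv_closed)
  show "a \<in> I \<Longrightarrow> r \<in> carrier R \<Longrightarrow> a \<otimes> r \<in> I"
    using assms unfolding right_ideal_def by blast
qed

lemma right_ideal_eq_carrier: "right_ideal R I \<Longrightarrow> \<one> \<in> I \<Longrightarrow> I = carrier R"
  using right_ideal_subset right_ideal_mult by (metis l_one subsetI subset_antisym)

lemma ideal_imp_right_ideal: "ideal I R \<Longrightarrow> right_ideal R I"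
  unfolding right_ideal_def ideal_def ideal_axioms_def by blast

lemma right_ideal_Int: "right_ideal R A \<Longrightarrow> right_ideal R B \<Longrightarrow> right_ideal R (A \<inter> B)"
  by (rule right_idealI) (auto dest: right_ideal_subset
      intro: right_ideal_zero right_ideal_add right_ideal_a_inv right_ideal_mult)

lemma right_ideal_Inter:
  "(\<And>M. M \<in> \<M> \<Longrightarrow> right_ideal R M) \<Longrightarrow> right_ideal R (carrier R \<inter> \<Inter>\<M>)"
  by (rule right_idealI) (auto intro: right_ideal_zero right_ideal_add right_ideal_a_inv right_ideal_mult)

lemma set_addI: "a \<in> A \<Longrightarrow> b \<in> B \<Longrightarrow> x = a \<oplus> b \<Longrightarrow> x \<in> A <+> B"
  unfolding set_add_def' by blast

lemma set_addE:
  assumes "x \<in> A <+> B"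
  obtains a b where "a \<in> A" "b \<in> B" "x = a \<oplus> b"
  using assms unfolding set_add_def' by blast

lemma right_ideal_set_add:
  assumes A: "right_ideal R A" and B: "right_ideal R B"
  shows "right_ideal R (A <+> B)"
  unfolding right_ideal_def
proof (intro conjI ballI)
  show "additive_subgroup (A <+> B) R"
    by (rule add_additive_subgroups) (use A B right_ideal_additive_subgroup in auto)
  fix x r assume x: "x \<in> A <+> B" and r: "r \<in> carrier R"
  obtain a b where ab: "a \<in> A" "b \<in> B" "x = a \<oplus> b"
    using x by (rule set_addE)
  have "a \<in> carrier R" "b \<in> carrier R"
    using ab right_ideal_subset[OF A] right_ideal_subset[OF B] by blast+
  then have "x \<otimes> r = a \<otimes> r \<oplus> b \<otimes> r"
    using ab(3) r by (simp add: l_distr)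
  then show "x \<otimes> r \<in> A <+> B"
    using right_ideal_mult[OF A ab(1) r] right_ideal_mult[OF B ab(2) r] by (blast intro: set_addI)
qed

lemma right_ideal_subset_set_add:
  assumes A: "right_ideal R A" and B: "right_ideal R B"
  shows "A \<subseteq> A <+> B" and "B \<subseteq> A <+> B"
proof -
  show "A \<subseteq> A <+> B"
  proof
    fix x assume x: "x \<in> A"
    then have "x = x \<oplus> \<zero>" using right_ideal_subset[OF A] by auto
    then show "x \<in> A <+> B" using x right_ideal_zero[OF B] by (blast intro: set_addI)
  qed
  show "B \<subseteq> A <+> B"
  proof
    fix x assume x: "x \<in> B"
    then have "x = \<zero> \<oplus> x" using right_ideal_subset[OF B] by auto
    then show "x \<in> A <+> B" using x right_ideal_zero[OF A] by (blast intro: set_addI)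
  qed
qed

lemma maximal_right_ideal_imp_right_ideal: "maximal_right_ideal R M \<Longrightarrow> right_ideal R M"
  unfolding maximal_right_ideal_def by blast

lemma maximal_right_ideal_set_add_eq_carrier:
  assumes M: "maximal_right_ideal R M" and A: "right_ideal R A" "\<not> A \<subseteq> M"
  shows "M <+> A = carrier R"
proof -
  have M_right: "right_ideal R M"
    using M by (rule maximal_right_ideal_imp_right_ideal)
  have "M \<subseteq> M <+> A" "A \<subseteq> M <+> A"
    using right_ideal_subset_set_add[OF M_right A(1)] by blast+
  then have "M <+> A \<noteq> M" using A(2) by blast
  then show ?thesis
    using M right_ideal_set_add[OF M_right A(1)] \<open>M \<subseteq> M <+> A\<close>
    unfolding maximal_right_ideal_def by blast
qed

lemma mem_jacobson_iff:
  "x \<in> jacobson R \<longleftrightarrow> x \<in> carrier R \<and> (\<forall>M. maximal_right_ideal R M \<longrightarrow> x \<in> M)"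
  unfolding jacobson_def by auto

lemma right_ideal_left_mult_image:
  assumes I: "right_ideal R I" and r: "r \<in> carrier R"
  shows "right_ideal R ((\<otimes>) r ` I)"
proof (rule right_idealI)
  note I_carrier = right_ideal_subset[OF I]
  show "(\<otimes>) r ` I \<subseteq> carrier R"
    using r I_carrier by auto
  have "r \<otimes> \<zero> = \<zero>" using r by simp
  then show "\<zero> \<in> (\<otimes>) r ` I"
    using right_ideal_zero[OF I] by (metis image_eqI)
  fix a assume "a \<in> (\<otimes>) r ` I"
  then obtain i where i: "i \<in> I" "a = r \<otimes> i" by blast
  have i_carrier: "i \<in> carrier R" using i I_carrier by blast
  have "\<ominus> a = r \<otimes> \<ominus> i" using i(2) i_carrier r by (simp add: r_minus)
  then show "\<ominus> a \<in> (\<otimes>) r ` I" using right_ideal_a_inv[OF I i(1)] by blast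
  show "a \<oplus> b \<in> (\<otimes>) r ` I" if b: "b \<in> (\<otimes>) r ` I" for b
  proof -
    obtain j where j: "j \<in> I" "b = r \<otimes> j" using b by blast
    have "j \<in> carrier R" using j I_carrier by blast
    then have "a \<oplus> b = r \<otimes> (i \<oplus> j)" using i j i_carrier r by (simp add: r_distr)
    then show ?thesis using right_ideal_add[OF I i(1) j(1)] by blast
  qed
  show "a \<otimes> s \<in> (\<otimes>) r ` I" if "s \<in> carrier R" for s
  proof -
    have "a \<otimes> s = r \<otimes> (i \<otimes> s)" using i(2) i_carrier r that by (simp add: m_assoc)
    then show ?thesis using right_ideal_mult[OF I i(1) that] by blast
  qed
qed

lemma maximal_right_ideal_colon:
  assumes M: "maximal_right_ideal R M" and r: "r \<in> carrier R" "r \<notin> M"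
  shows "maximal_right_ideal R {y \<in> carrier R. r \<otimes> y \<in> M}" (is "maximal_right_ideal R ?C")
proof -
  have M_right: "right_ideal R M" using M by (rule maximal_right_ideal_imp_right_ideal)
  have C_right: "right_ideal R ?C"
  proof (rule right_idealI)
    show "a \<oplus> b \<in> ?C" if "a \<in> ?C" "b \<in> ?C" for a b
      using that r right_ideal_add[OF M_right] by (simp add: r_distr)
    show "\<ominus> a \<in> ?C" if "a \<in> ?C" for a
      using that r right_ideal_a_inv[OF M_right] by (simp add: r_minus)
    show "a \<otimes> s \<in> ?C" if "a \<in> ?C" "s \<in> carrier R" for a s
      using that r right_ideal_mult[OF M_right] by (simp add: m_assoc[symmetric])
  qed (use r right_ideal_zero[OF M_right] in auto)
  have C_proper: "?C \<noteq> carrier R"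
    using r by (metis (no_types, lifting) mem_Collect_eq one_closed r_one)
  have "I = ?C \<or> I = carrier R" if I: "right_ideal R I" "?C \<subseteq> I" for I
  proof (cases "I = ?C")
    case False
    then obtain y where y: "y \<in> I" "r \<otimes> y \<notin> M"
      using I right_ideal_subset by blast
    \<comment> \<open>As \<open>rI \<notin> M\<close>, maximality gives \<open>r = m + ri\<close>, so \<open>1 - i \<in> ?C \<subseteq> I\<close>.\<close>
    have "r \<in> M <+> (\<otimes>) r ` I"
      using maximal_right_ideal_set_add_eq_carrier[OF M right_ideal_left_mult_image[OF I(1) r(1)]] y r(1)
      by blast
    then obtain m i where mi: "m \<in> M" "i \<in> I" "r = m \<oplus> r \<otimes> i"
      by (auto elim: set_addE)
    have carrier: "m \<in> carrier R" "i \<in> carrier R"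
      using mi right_ideal_subset[OF M_right] right_ideal_subset[OF I(1)] by blast+
    have "r \<otimes> (\<one> \<ominus> i) = r \<ominus> r \<otimes> i"
      using carrier r(1) by (simp add: a_minus_def r_distr r_minus)
    also have "\<dots> = (m \<oplus> r \<otimes> i) \<ominus> r \<otimes> i"
      using arg_cong[of _ _ "\<lambda>x. x \<ominus> r \<otimes> i", OF mi(3)] .
    also have "\<dots> = m"
      using carrier r(1) by (simp add: a_minus_def a_assoc r_neg)
    finally have "r \<otimes> (\<one> \<ominus> i) = m" .
    then have "\<one> \<ominus> i \<in> I" using I(2) mi(1) carrier by auto
    then have "(\<one> \<ominus> i) \<oplus> i \<in> I" using right_ideal_add[OF I(1)] mi(2) by blast
    then show ?thesis
      using right_ideal_eq_carrier[OF I(1)] carrier by (simp add: a_minus_def a_assoc l_neg)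
  qed simp
  then show ?thesis
    unfolding maximal_right_ideal_def using C_right C_proper by blast
qed

lemma ideal_jacobson: "ideal (jacobson R) R"
proof -
  have J_right: "right_ideal R (jacobson R)"
    unfolding jacobson_def
    by (rule right_ideal_Inter) (auto dest: maximal_right_ideal_imp_right_ideal)
  have "x \<otimes> a \<in> jacobson R" if a: "a \<in> jacobson R" and x: "x \<in> carrier R" for a x
    unfolding mem_jacobson_iff
  proof (intro conjI allI impI)
    show "x \<otimes> a \<in> carrier R" using a x by (simp add: mem_jacobson_iff)
    fix M assume M: "maximal_right_ideal R M"
    show "x \<otimes> a \<in> M"
    proof (cases "x \<in> M")
      case True
      then show ?thesis
        using right_ideal_mult[OF maximal_right_ideal_imp_right_ideal[OF M]] a
        by (simp add: mem_jacobson_iff)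
    next
      case False
      then show ?thesis
        using maximal_right_ideal_colon[OF M x] a by (auto simp: mem_jacobson_iff)
    qed
  qed
  then show ?thesis
    using J_right right_ideal_mult[OF J_right]
    by (intro idealI ring_axioms) (auto simp: right_ideal_def additive_subgroup_def)
qed

end

text \<open>The right \<open>R\<close>-module \<open>R/K\<close> is semisimple: every submodule \<open>A/K\<close> has a complement \<open>B/K\<close>.\<close>

definition semisimple_modulo :: "('a, 'b) ring_scheme \<Rightarrow> 'a set \<Rightarrow> bool" where
  "semisimple_modulo R K \<longleftrightarrow> (\<forall>A. right_ideal R A \<and> K \<subseteq> A \<longrightarrow>
     (\<exists>B. right_ideal R B \<and> K \<subseteq> B \<and> A \<inter> B = K \<and> A <+>\<^bsub>R\<^esub> B = carrier R))"

lemma semisimple_moduloI: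
  "(\<And>A. right_ideal R A \<Longrightarrow> K \<subseteq> A \<Longrightarrow>
      \<exists>B. right_ideal R B \<and> K \<subseteq> B \<and> A \<inter> B = K \<and> A <+>\<^bsub>R\<^esub> B = carrier R)
    \<Longrightarrow> semisimple_modulo R K"
  unfolding semisimple_modulo_def by blast

lemma semisimple_moduloD:
  "semisimple_modulo R K \<Longrightarrow> right_ideal R A \<Longrightarrow> K \<subseteq> A \<Longrightarrow>
    \<exists>B. right_ideal R B \<and> K \<subseteq> B \<and> A \<inter> B = K \<and> A <+>\<^bsub>R\<^esub> B = carrier R"
  unfolding semisimple_modulo_def by blast

context ring
begin

lemma semisimple_ring_iff_semisimple_modulo_zero:
  "semisimple_ring R \<longleftrightarrow> semisimple_modulo R {\<zero>}"
proof -
  have zero_subset: "{\<zero>} \<subseteq> A" if "right_ideal R A" for A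
    using right_ideal_zero[OF that] by blast
  show ?thesis
    unfolding semisimple_ring_def semisimple_modulo_def
  proof (intro iffI allI impI)
    fix A assume ss: "\<forall>I. right_ideal R I \<longrightarrow>
        (\<exists>K. right_ideal R K \<and> I \<inter> K = {\<zero>} \<and> I <+> K = carrier R)"
      and A: "right_ideal R A \<and> {\<zero>} \<subseteq> A"
    then obtain K where K: "right_ideal R K" "A \<inter> K = {\<zero>}" "A <+> K = carrier R"
      using ss[rule_format, of A] by blast
    then show "\<exists>B. right_ideal R B \<and> {\<zero>} \<subseteq> B \<and> A \<inter> B = {\<zero>} \<and> A <+> B = carrier R"
      using zero_subset[OF K(1)] by blast
  next
    fix A assume ss: "\<forall>I. right_ideal R I \<and> {\<zero>} \<subseteq> I \<longrightarrow>
        (\<exists>B. right_ideal R B \<and> {\<zero>} \<subseteq> B \<and> I \<inter> B = {\<zero>} \<and> I <+> B = carrier R)"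
      and A: "right_ideal R A"
    then show "\<exists>K. right_ideal R K \<and> A \<inter> K = {\<zero>} \<and> A <+> K = carrier R"
      using ss[rule_format, of A] zero_subset[OF A] by blast
  qed
qed

lemma semisimple_modulo_Int:
  assumes X: "right_ideal R X" and Y: "right_ideal R Y"
    and X_ss: "semisimple_modulo R X" and Y_ss: "semisimple_modulo R Y"
  shows "semisimple_modulo R (X \<inter> Y)"
proof (rule semisimple_moduloI)
  fix A assume A_right: "right_ideal R A" and A: "X \<inter> Y \<subseteq> A"
  \<comment> \<open>Complement \<open>A + X\<close> modulo \<open>X\<close> by \<open>C\<close>, then \<open>(A \<inter> X) + Y\<close> modulo \<open>Y\<close> by \<open>W\<close>;
    by modularity \<open>C \<inter> W\<close> complements \<open>A\<close> modulo \<open>X \<inter> Y\<close>.\<close>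
  obtain C where C: "right_ideal R C" "X \<subseteq> C" "(A <+> X) \<inter> C = X" "(A <+> X) <+> C = carrier R"
    using semisimple_moduloD[OF X_ss right_ideal_set_add[OF A_right X]
        right_ideal_subset_set_add(2)[OF A_right X]] by blast
  have AX_right: "right_ideal R (A \<inter> X)" using right_ideal_Int[OF A_right X] .
  obtain W where W: "right_ideal R W" "Y \<subseteq> W" "((A \<inter> X) <+> Y) \<inter> W = Y"
      "((A \<inter> X) <+> Y) <+> W = carrier R"
    using semisimple_moduloD[OF Y_ss right_ideal_set_add[OF AX_right Y]
        right_ideal_subset_set_add(2)[OF AX_right Y]] by blast
  have "A \<inter> (C \<inter> W) \<subseteq> X \<inter> Y"
  proof
    fix x assume x: "x \<in> A \<inter> (C \<inter> W)"
    then have "x \<in> X"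
      using C(3) right_ideal_subset_set_add(1)[OF A_right X] by blast
    then have "x \<in> Y"
      using x W(3) right_ideal_subset_set_add(1)[OF AX_right Y] by blast
    then show "x \<in> X \<inter> Y" using \<open>x \<in> X\<close> by blast
  qed
  then have int: "A \<inter> (C \<inter> W) = X \<inter> Y" using A C(2) W(2) by blast
  have "carrier R \<subseteq> A <+> (C \<inter> W)"
  proof
    fix r assume "r \<in> carrier R"
    then have "r \<in> (A <+> X) <+> C" using C(4) by simp
    then obtain a x c where axc: "a \<in> A" "x \<in> X" "c \<in> C" "r = (a \<oplus> x) \<oplus> c"
      by (metis set_addE)
    have carrier_axc: "a \<in> carrier R" "x \<in> carrier R" "c \<in> carrier R"
      using axc(1) right_ideal_subset[OF A_right] axc(2) right_ideal_subset[OF X]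
        axc(3) right_ideal_subset[OF C(1)] by blast+
    have "x \<oplus> c \<in> (A \<inter> X <+> Y) <+> W" using carrier_axc W(4) by simp
    then obtain z y w where zyw: "z \<in> A \<inter> X" "y \<in> Y" "w \<in> W" "x \<oplus> c = (z \<oplus> y) \<oplus> w"
      by (metis set_addE)
    have carrier_zyw: "z \<in> carrier R" "y \<in> carrier R" "w \<in> carrier R"
      using zyw(1) right_ideal_subset[OF AX_right] zyw(2) right_ideal_subset[OF Y]
        zyw(3) right_ideal_subset[OF W(1)] by blast+
    have yw: "y \<oplus> w = (x \<oplus> c) \<ominus> z"
      using zyw(4) carrier_axc carrier_zyw by (simp add: a_minus_def a_ac r_neg)
    have "x \<oplus> c \<in> C" using right_ideal_add[OF C(1)] axc(2,3) C(2) by blast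
    moreover have "z \<in> C" using zyw(1) C(2) by blast
    ultimately have "y \<oplus> w \<in> C" unfolding yw by (rule right_ideal_minus[OF C(1)])
    moreover have "y \<oplus> w \<in> W" using right_ideal_add[OF W(1)] W(2) zyw(2,3) by blast
    moreover have "a \<oplus> z \<in> A" using right_ideal_add[OF A_right] axc(1) zyw(1) by blast
    moreover have "r = (a \<oplus> z) \<oplus> (y \<oplus> w)"
      using axc(4) zyw(4) carrier_axc carrier_zyw by (simp add: a_ac)
    ultimately show "r \<in> A <+> (C \<inter> W)" by (blast intro: set_addI)
  qed
  then have "A <+> (C \<inter> W) = carrier R"
    using right_ideal_subset[OF right_ideal_set_add[OF A_right right_ideal_Int[OF C(1) W(1)]]]
    by blast
  then show "\<exists>B. right_ideal R B \<and> X \<inter> Y \<subseteq> B \<and> A \<inter> B = X \<inter> Y \<and> A <+> B = carrier R"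
    using right_ideal_Int[OF C(1) W(1)] int C(2) W(2) by blast
qed

lemma rev_prod_closed: "(\<And>k. a k \<in> carrier R) \<Longrightarrow> rev_prod R a n \<in> carrier R"
  by (induction n) auto

lemma rev_prod_add:
  assumes "\<And>k. a k \<in> carrier R"
  shows "rev_prod R a (m + Suc n) = rev_prod R (\<lambda>k. a (k + Suc n)) m \<otimes> rev_prod R a n"
proof (induction m)
  case (Suc m)
  then show ?case
    using assms rev_prod_closed[of "\<lambda>k. a (k + Suc n)"] rev_prod_closed[of a] by (simp add: m_assoc)
qed simp

end

locale surj_ring_hom = ring_hom_ring R S h for R (structure) and S (structure) and h +
  assumes surj: "h ` carrier R = carrier S"
begin

lemma minus_mem_a_kernel:
  assumes "x \<in> carrier R" "y \<in> carrier R" "h x = h y"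
  shows "x \<ominus> y \<in> a_kernel R S h"
proof -
  have "h (x \<ominus> y) = h x \<oplus>\<^bsub>S\<^esub> \<ominus>\<^bsub>S\<^esub> h y"
    using assms(1,2) by (simp add: a_minus_def)
  also have "\<dots> = \<zero>\<^bsub>S\<^esub>"
    using assms by (simp add: S.r_neg)
  finally have "h (x \<ominus> y) = \<zero>\<^bsub>S\<^esub>" .
  moreover have "x \<ominus> y \<in> carrier R" using assms(1,2) by (rule R.minus_closed)
  ultimately show ?thesis unfolding a_kernel_def' by blast
qed

lemma right_ideal_vimage: "right_ideal S B \<Longrightarrow> right_ideal R (h -` B \<inter> carrier R)"
  by (rule R.right_idealI)
    (auto intro: S.right_ideal_zero S.right_ideal_add S.right_ideal_a_inv S.right_ideal_mult)

lemma right_ideal_image: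
  assumes A: "right_ideal R A"
  shows "right_ideal S (h ` A)"
proof (rule S.right_idealI)
  note A_carrier = R.right_ideal_subset[OF A]
  show "h ` A \<subseteq> carrier S" using A_carrier by auto
  show "\<zero>\<^bsub>S\<^esub> \<in> h ` A" using R.right_ideal_zero[OF A] by (force intro!: image_eqI[of _ _ \<zero>])
  fix y assume "y \<in> h ` A"
  then obtain x where x: "x \<in> A" "y = h x" by blast
  have x_carrier: "x \<in> carrier R" using x(1) A_carrier by blast
  show "\<ominus>\<^bsub>S\<^esub> y \<in> h ` A"
    using x x_carrier R.right_ideal_a_inv[OF A] by (auto intro!: image_eqI[of _ _ "\<ominus> x"])
  show "y \<oplus>\<^bsub>S\<^esub> z \<in> h ` A" if z: "z \<in> h ` A" for z
  proof -
    obtain x' where x': "x' \<in> A" "z = h x'" using z by blast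
    then show ?thesis
      using x x_carrier A_carrier R.right_ideal_add[OF A] by (auto intro!: image_eqI[of _ _ "x \<oplus> x'"])
  qed
  show "y \<otimes>\<^bsub>S\<^esub> s \<in> h ` A" if s: "s \<in> carrier S" for s
  proof -
    obtain r where r: "r \<in> carrier R" "s = h r" using s surj by blast
    then show ?thesis
      using x x_carrier R.right_ideal_mult[OF A] by (auto intro!: image_eqI[of _ _ "x \<otimes> r"])
  qed
qed

lemma a_kernel_subset_vimage: "\<zero>\<^bsub>S\<^esub> \<in> B \<Longrightarrow> a_kernel R S h \<subseteq> h -` B \<inter> carrier R"
  unfolding a_kernel_def' by auto

lemma image_vimage_eq:
  assumes "B \<subseteq> carrier S"
  shows "h ` (h -` B \<inter> carrier R) = B"
proof
  show "B \<subseteq> h ` (h -` B \<inter> carrier R)"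
  proof
    fix y assume y: "y \<in> B"
    then obtain x where "x \<in> carrier R" "y = h x" using assms surj by (metis imageE subsetD)
    then show "y \<in> h ` (h -` B \<inter> carrier R)" using y by blast
  qed
qed blast

lemma vimage_image_eq:
  assumes A: "right_ideal R A" and ker: "a_kernel R S h \<subseteq> A"
  shows "h -` h ` A \<inter> carrier R = A"
proof
  show "A \<subseteq> h -` h ` A \<inter> carrier R" using R.right_ideal_subset[OF A] by blast
  show "h -` h ` A \<inter> carrier R \<subseteq> A"
  proof
    fix x assume "x \<in> h -` h ` A \<inter> carrier R"
    then obtain a where a: "a \<in> A" "h x = h a" "x \<in> carrier R" by blast
    have a_carrier: "a \<in> carrier R" using a(1) R.right_ideal_subset[OF A] by blast
    then have "x \<ominus> a \<in> A" using minus_mem_a_kernel[OF a(3) a_carrier a(2)] ker by blast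
    then have "(x \<ominus> a) \<oplus> a \<in> A" using R.right_ideal_add[OF A _ a(1)] by blast
    then show "x \<in> A" using a(3) a_carrier by (simp add: a_minus_def R.a_assoc R.l_neg)
  qed
qed

lemma eq_carrier_if_image_eq_carrier:
  assumes "right_ideal R A" "a_kernel R S h \<subseteq> A" "h ` A = carrier S"
  shows "A = carrier R"
  using vimage_image_eq[OF assms(1,2)] assms(3) by auto

lemma maximal_right_ideal_vimage:
  assumes M: "maximal_right_ideal S M"
  shows "maximal_right_ideal R (h -` M \<inter> carrier R)" (is "maximal_right_ideal R ?M")
proof -
  have M_right: "right_ideal S M" using M by (rule S.maximal_right_ideal_imp_right_ideal)
  have hM: "h ` ?M = M" using image_vimage_eq[OF S.right_ideal_subset[OF M_right]] .
  have ker: "a_kernel R S h \<subseteq> ?M" using a_kernel_subset_vimage[OF S.right_ideal_zero[OF M_right]] .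
  have proper: "?M \<noteq> carrier R"
    using M hM surj unfolding maximal_right_ideal_def by auto
  have "I = ?M \<or> I = carrier R" if I: "right_ideal R I" "?M \<subseteq> I" for I
  proof -
    have "M \<subseteq> h ` I" using image_mono[OF I(2), of h] hM by simp
    then have "h ` I = M \<or> h ` I = carrier S"
      using M right_ideal_image[OF I(1)] unfolding maximal_right_ideal_def by blast
    then show ?thesis
    proof
      assume "h ` I = M"
      then show ?thesis using I R.right_ideal_subset[OF I(1)] by blast
    next
      assume "h ` I = carrier S"
      then show ?thesis using eq_carrier_if_image_eq_carrier[OF I(1)] ker I(2) by blast
    qed
  qed
  then show ?thesis
    unfolding maximal_right_ideal_def using right_ideal_vimage[OF M_right] proper by blast
qed

lemma maximal_right_ideal_image:
  assumes M: "maximal_right_ideal R M" and ker: "a_kernel R S h \<subseteq> M"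
  shows "maximal_right_ideal S (h ` M)"
proof -
  have M_right: "right_ideal R M" using M by (rule R.maximal_right_ideal_imp_right_ideal)
  have proper: "h ` M \<noteq> carrier S"
    using eq_carrier_if_image_eq_carrier[OF M_right ker] M unfolding maximal_right_ideal_def by blast
  have "I = h ` M \<or> I = carrier S" if I: "right_ideal S I" "h ` M \<subseteq> I" for I
  proof -
    have "M \<subseteq> h -` I \<inter> carrier R" using I(2) R.right_ideal_subset[OF M_right] by blast
    then have "h -` I \<inter> carrier R = M \<or> h -` I \<inter> carrier R = carrier R"
      using M right_ideal_vimage[OF I(1)] unfolding maximal_right_ideal_def by blast
    then show ?thesis
      using image_vimage_eq[OF S.right_ideal_subset[OF I(1)]] surj by metis
  qed
  then show ?thesis
    unfolding maximal_right_ideal_def using right_ideal_image[OF M_right] proper by blast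
qed

lemma vimage_jacobson:
  "h -` jacobson S \<inter> carrier R =
    carrier R \<inter> \<Inter>{M. maximal_right_ideal R M \<and> a_kernel R S h \<subseteq> M}"
proof (intro equalityI subsetI)
  fix x assume x: "x \<in> h -` jacobson S \<inter> carrier R"
  have "x \<in> M" if M: "maximal_right_ideal R M" "a_kernel R S h \<subseteq> M" for M
  proof -
    have "h x \<in> h ` M" using x maximal_right_ideal_image[OF M] by (auto simp: S.mem_jacobson_iff)
    then show ?thesis using vimage_image_eq[OF R.maximal_right_ideal_imp_right_ideal[OF M(1)] M(2)] x
      by blast
  qed
  then show "x \<in> carrier R \<inter> \<Inter>{M. maximal_right_ideal R M \<and> a_kernel R S h \<subseteq> M}"
    using x by blast
next
  fix x assume x: "x \<in> carrier R \<inter> \<Inter>{M. maximal_right_ideal R M \<and> a_kernel R S h \<subseteq> M}"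
  have "h x \<in> M" if M: "maximal_right_ideal S M" for M
    using x maximal_right_ideal_vimage[OF M]
      a_kernel_subset_vimage[OF S.right_ideal_zero[OF S.maximal_right_ideal_imp_right_ideal[OF M]]]
    by blast
  then show "x \<in> h -` jacobson S \<inter> carrier R" using x by (auto simp: S.mem_jacobson_iff)
qed

lemma jacobson_image: "x \<in> jacobson R \<Longrightarrow> h x \<in> jacobson S"
  using maximal_right_ideal_vimage by (auto simp: R.mem_jacobson_iff S.mem_jacobson_iff)

lemma semisimple_modulo_vimage_iff:
  assumes K: "right_ideal S K"
  shows "semisimple_modulo R (h -` K \<inter> carrier R) \<longleftrightarrow> semisimple_modulo S K"
    (is "semisimple_modulo R ?K \<longleftrightarrow> _")
proof
  have hK: "h ` ?K = K" using image_vimage_eq[OF S.right_ideal_subset[OF K]] .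
  have ker: "a_kernel R S h \<subseteq> ?K" using a_kernel_subset_vimage[OF S.right_ideal_zero[OF K]] .
  show "semisimple_modulo S K" if ss: "semisimple_modulo R ?K"
  proof (rule semisimple_moduloI)
    fix A' assume A': "right_ideal S A'" "K \<subseteq> A'"
    define A where "A = h -` A' \<inter> carrier R"
    have A: "right_ideal R A" "?K \<subseteq> A"
      unfolding A_def using right_ideal_vimage[OF A'(1)] A'(2) by blast+
    obtain B where B: "right_ideal R B" "?K \<subseteq> B" "A \<inter> B = ?K" "A <+> B = carrier R"
      using semisimple_moduloD[OF ss A] by blast
    have hA: "h ` A = A'" unfolding A_def using image_vimage_eq[OF S.right_ideal_subset[OF A'(1)]] .
    have "A' \<inter> h ` B \<subseteq> K"
    proof
      fix y assume "y \<in> A' \<inter> h ` B"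
      then obtain b where b: "b \<in> B" "h b \<in> A'" "y = h b" by blast
      then have "b \<in> A \<inter> B" unfolding A_def using R.right_ideal_subset[OF B(1)] by blast
      then show "y \<in> K" using B(3) b(3) by blast
    qed
    moreover have "K \<subseteq> h ` B" using image_mono[OF B(2), of h] hK by simp
    ultimately have "A' \<inter> h ` B = K" using A'(2) by blast
    moreover have "A' <+>\<^bsub>S\<^esub> h ` B = carrier S"
      using set_add_hom[OF homh R.right_ideal_subset[OF A(1)] R.right_ideal_subset[OF B(1)]]
        hA B(4) surj by simp
    ultimately show "\<exists>B'. right_ideal S B' \<and> K \<subseteq> B' \<and> A' \<inter> B' = K \<and> A' <+>\<^bsub>S\<^esub> B' = carrier S"
      using right_ideal_image[OF B(1)] \<open>K \<subseteq> h ` B\<close> by blast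
  qed
  show "semisimple_modulo R ?K" if ss: "semisimple_modulo S K"
  proof (rule semisimple_moduloI)
    fix A assume A: "right_ideal R A" "?K \<subseteq> A"
    have "K \<subseteq> h ` A" using image_mono[OF A(2), of h] hK by simp
    then obtain B' where B': "right_ideal S B'" "K \<subseteq> B'" "h ` A \<inter> B' = K"
        "h ` A <+>\<^bsub>S\<^esub> B' = carrier S"
      using semisimple_moduloD[OF ss right_ideal_image[OF A(1)]] by blast
    define B where "B = h -` B' \<inter> carrier R"
    have B: "right_ideal R B" "?K \<subseteq> B"
      unfolding B_def using right_ideal_vimage[OF B'(1)] B'(2) by blast+
    have "A \<inter> B \<subseteq> ?K"
    proof
      fix x assume "x \<in> A \<inter> B"
      then have "h x \<in> h ` A \<inter> B'" "x \<in> carrier R" unfolding B_def by blast+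
      then show "x \<in> ?K" using B'(3) by blast
    qed
    then have "A \<inter> B = ?K" using A(2) B(2) by blast
    moreover have "A <+> B = carrier R"
    proof (rule eq_carrier_if_image_eq_carrier)
      show "right_ideal R (A <+> B)" using R.right_ideal_set_add[OF A(1) B(1)] .
      show "a_kernel R S h \<subseteq> A <+> B"
        using ker A(2) R.right_ideal_subset_set_add(1)[OF A(1) B(1)] by blast
      have "h ` B = B'" unfolding B_def using image_vimage_eq[OF S.right_ideal_subset[OF B'(1)]] .
      then show "h ` (A <+> B) = carrier S"
        using set_add_hom[OF homh R.right_ideal_subset[OF A(1)] R.right_ideal_subset[OF B(1)]] B'(4)
        by simp
    qed
    ultimately show "\<exists>B. right_ideal R B \<and> ?K \<subseteq> B \<and> A \<inter> B = ?K \<and> A <+> B = carrier R"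
      using B by blast
  qed
qed

lemma rev_prod_hom: "(\<And>k. a k \<in> carrier R) \<Longrightarrow> rev_prod S (h \<circ> a) n = h (rev_prod R a n)"
  by (induction n) (auto simp: R.rev_prod_closed)

lemma rev_prod_mem_a_kernel:
  assumes S_nil: "T_nilpotent_for_right S (jacobson S)" and a: "\<And>n. a n \<in> jacobson R"
  shows "\<exists>n. rev_prod R a n \<in> a_kernel R S h"
proof -
  have a_carrier: "\<And>k. a k \<in> carrier R" using a R.mem_jacobson_iff by blast
  obtain n where "rev_prod S (h \<circ> a) n = \<zero>\<^bsub>S\<^esub>"
    using S_nil[unfolded T_nilpotent_for_right_def, rule_format, of "h \<circ> a"] jacobson_image[OF a]
    by auto
  then show ?thesis
    using rev_prod_hom[OF a_carrier] R.rev_prod_closed[OF a_carrier] unfolding a_kernel_def' by auto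
qed

lemma semisimple_ring_iff_semisimple_modulo_a_kernel:
  "semisimple_ring S \<longleftrightarrow> semisimple_modulo R (a_kernel R S h)"
proof -
  have "h -` {\<zero>\<^bsub>S\<^esub>} \<inter> carrier R = a_kernel R S h"
    unfolding a_kernel_def' by blast
  then show ?thesis
    using S.semisimple_ring_iff_semisimple_modulo_zero
      semisimple_modulo_vimage_iff[OF S.ideal_imp_right_ideal[OF S.zeroideal]]
    by simp
qed

end

lemma (in ideal) surj_ring_hom_quotient: "surj_ring_hom R (R Quot I) ((+>) I)"
proof (rule surj_ring_hom.intro[OF rcos_ring_hom_ring])
  show "surj_ring_hom_axioms R (R Quot I) ((+>) I)"
    by unfold_locales (auto simp: FactRing_def A_RCOSETS_def')
qed

lemma (in ideal) a_kernel_quotient: "a_kernel R (R Quot I) ((+>) I) = I"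
proof -
  have zero: "\<zero>\<^bsub>R Quot I\<^esub> = I" by (simp add: FactRing_def)
  show ?thesis
  proof (intro equalityI subsetI)
    fix x assume "x \<in> a_kernel R (R Quot I) ((+>) I)"
    then have "x \<in> carrier R" "I +> x = I" unfolding a_kernel_def' zero by auto
    then show "x \<in> I" using rcos_const_imp_mem by blast
  next
    fix x assume x: "x \<in> I"
    then have "x \<in> carrier R" "I +> x = I" using a_rcos_zero[OF is_ideal] Icarr by auto
    then show "x \<in> a_kernel R (R Quot I) ((+>) I)" unfolding a_kernel_def' zero by auto
  qed
qed

context ring
begin

lemma semisimple_ring_quotient_iff:
  "ideal I R \<Longrightarrow> semisimple_ring (R Quot I) \<longleftrightarrow> semisimple_modulo R I"
  using surj_ring_hom.semisimple_ring_iff_semisimple_modulo_a_kernel[OF ideal.surj_ring_hom_quotient]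
    ideal.a_kernel_quotient by metis

lemma semisimple_modulo_if_right_perfect_quotient:
  assumes I: "ideal I R" and perfect: "right_perfect (R Quot I)"
  shows "semisimple_modulo R (carrier R \<inter> \<Inter>{M. maximal_right_ideal R M \<and> I \<subseteq> M})"
proof -
  interpret q: surj_ring_hom R "R Quot I" "(+>) I"
    using I by (rule ideal.surj_ring_hom_quotient)
  have "semisimple_modulo (R Quot I) (jacobson (R Quot I))"
    using perfect ring.semisimple_ring_quotient_iff[OF q.S.ring_axioms q.S.ideal_jacobson]
    unfolding right_perfect_def by blast
  then have "semisimple_modulo R ((+>) I -` jacobson (R Quot I) \<inter> carrier R)"
    using q.semisimple_modulo_vimage_iff[OF q.S.ideal_imp_right_ideal[OF q.S.ideal_jacobson]] by blast
  then show ?thesis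
    using q.vimage_jacobson ideal.a_kernel_quotient[OF I] by simp
qed

lemma rev_prod_mem_if_right_perfect_quotient:
  assumes I: "ideal I R" and perfect: "right_perfect (R Quot I)"
    and a: "\<And>n. a n \<in> jacobson R"
  shows "\<exists>n. rev_prod R a n \<in> I"
proof -
  interpret q: surj_ring_hom R "R Quot I" "(+>) I"
    using I by (rule ideal.surj_ring_hom_quotient)
  show ?thesis
    using q.rev_prod_mem_a_kernel[OF _ a] perfect ideal.a_kernel_quotient[OF I]
    unfolding right_perfect_def by simp
qed

lemma maximal_right_ideal_contains_factor:
  assumes I: "ideal I R" and J: "ideal J R"
    and IJ: "\<And>i j. i \<in> I \<Longrightarrow> j \<in> J \<Longrightarrow> i \<otimes> j = \<zero>"
    and M: "maximal_right_ideal R M"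
  shows "I \<subseteq> M \<or> J \<subseteq> M"
proof (cases "I \<subseteq> M")
  case False
  then have "\<one> \<in> M <+> I"
    using maximal_right_ideal_set_add_eq_carrier[OF M ideal_imp_right_ideal[OF I]] by simp
  then obtain m i where mi: "m \<in> M" "i \<in> I" "\<one> = m \<oplus> i" by (rule set_addE)
  have M_right: "right_ideal R M" using M by (rule maximal_right_ideal_imp_right_ideal)
  have carrier: "m \<in> carrier R" "i \<in> carrier R"
    using mi right_ideal_subset[OF M_right] ideal.Icarr[OF I] by blast+
  have "J \<subseteq> M"
  proof
    fix j assume j: "j \<in> J"
    have j_carrier: "j \<in> carrier R" using j ideal.Icarr[OF J] by blast
    have "j = (m \<oplus> i) \<otimes> j" using mi(3) j_carrier by (metis l_one)
    also have "\<dots> = m \<otimes> j" using IJ[OF mi(2) j] carrier j_carrier by (simp add: l_distr)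
    finally show "j \<in> M" using right_ideal_mult[OF M_right mi(1) j_carrier] by simp
  qed
  then show ?thesis by blast
qed simp

lemma not_prime_ringE:
  assumes "\<not> prime_ring R"
  obtains I J where "ideal I R" "ideal J R" "I \<noteq> {\<zero>}" "J \<noteq> {\<zero>}"
    "I \<noteq> carrier R" "J \<noteq> carrier R" "\<And>i j. i \<in> I \<Longrightarrow> j \<in> J \<Longrightarrow> i \<otimes> j = \<zero>"
proof -
  obtain I J where I: "ideal I R" and J: "ideal J R" and IJ: "I \<cdot> J = {\<zero>}"
    and nonzero: "I \<noteq> {\<zero>}" "J \<noteq> {\<zero>}"
    using assms unfolding prime_ring_def by blast
  have prod: "i \<otimes> j = \<zero>" if "i \<in> I" "j \<in> J" for i j
    using IJ ideal_prod.prod[OF that] by blast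
  have "I \<noteq> carrier R"
  proof
    assume "I = carrier R"
    then have "j = \<zero>" if "j \<in> J" for j
      using prod[of \<one> j] that ideal.Icarr[OF J] by simp
    then show False using nonzero(2) additive_subgroup.zero_closed[OF ideal.axioms(1)[OF J]] by blast
  qed
  moreover have "J \<noteq> carrier R"
  proof
    assume "J = carrier R"
    then have "i = \<zero>" if "i \<in> I" for i
      using prod[of i \<one>] that ideal.Icarr[OF I] by simp
    then show False using nonzero(1) additive_subgroup.zero_closed[OF ideal.axioms(1)[OF I]] by blast
  qed
  ultimately show ?thesis using that I J nonzero prod by blast
qed

lemma jacobson_eq_Int_if_annihilating:
  assumes "ideal I R" "ideal J R" "\<And>i j. i \<in> I \<Longrightarrow> j \<in> J \<Longrightarrow> i \<otimes> j = \<zero>"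
  shows "jacobson R = (carrier R \<inter> \<Inter>{M. maximal_right_ideal R M \<and> I \<subseteq> M}) \<inter>
    (carrier R \<inter> \<Inter>{M. maximal_right_ideal R M \<and> J \<subseteq> M})"
  unfolding jacobson_def using maximal_right_ideal_contains_factor[OF assms] by blast

lemma T_nilpotent_jacobson_if_annihilating:
  assumes IJ: "\<And>i j. i \<in> I \<Longrightarrow> j \<in> J \<Longrightarrow> i \<otimes> j = \<zero>"
    and I: "\<And>a. (\<And>n. a n \<in> jacobson R) \<Longrightarrow> \<exists>n. rev_prod R a n \<in> I"
    and J: "\<And>a. (\<And>n. a n \<in> jacobson R) \<Longrightarrow> \<exists>n. rev_prod R a n \<in> J"
  shows "T_nilpotent_for_right R (jacobson R)"
  unfolding T_nilpotent_for_right_def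
proof (intro allI impI)
  fix a :: "nat \<Rightarrow> 'a" assume a: "\<forall>n. a n \<in> jacobson R"
  obtain n where n: "rev_prod R a n \<in> J" using J a by blast
  obtain m where m: "rev_prod R (\<lambda>k. a (k + Suc n)) m \<in> I" using I[of "\<lambda>k. a (k + Suc n)"] a by blast
  have "rev_prod R a (m + Suc n) = rev_prod R (\<lambda>k. a (k + Suc n)) m \<otimes> rev_prod R a n"
    using a mem_jacobson_iff by (intro rev_prod_add) blast
  also have "\<dots> = \<zero>" using IJ[OF m n] .
  finally show "\<exists>n. rev_prod R a n = \<zero>" by blast
qed

theorem right_perfect_if_right_almost_perfect_not_prime:
  assumes almost_perfect: "right_almost_perfect R" and not_prime: "\<not> prime_ring R"
  shows "right_perfect R"
proof -
  obtain I J where I: "ideal I R" and J: "ideal J R" and IJ: "\<And>i j. i \<in> I \<Longrightarrow> j \<in> J \<Longrightarrow> i \<otimes> j = \<zero>"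
    and perfect: "right_perfect (R Quot I)" "right_perfect (R Quot J)"
  proof (rule not_prime_ringE[OF not_prime])
    fix I J assume "ideal I R" "ideal J R" "I \<noteq> {\<zero>}" "J \<noteq> {\<zero>}" "I \<noteq> carrier R" "J \<noteq> carrier R"
      "\<And>i j. i \<in> I \<Longrightarrow> j \<in> J \<Longrightarrow> i \<otimes> j = \<zero>"
    then show thesis
      using that almost_perfect[unfolded right_almost_perfect_def, rule_format, of I]
        almost_perfect[unfolded right_almost_perfect_def, rule_format, of J]
      by blast
  qed
  have "semisimple_modulo R (jacobson R)"
    using semisimple_modulo_Int[OF right_ideal_Inter right_ideal_Inter
        semisimple_modulo_if_right_perfect_quotient[OF I perfect(1)]
        semisimple_modulo_if_right_perfect_quotient[OF J perfect(2)]]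
      jacobson_eq_Int_if_annihilating[OF I J IJ] maximal_right_ideal_imp_right_ideal
    by auto
  then have "semisimple_ring (R Quot jacobson R)"
    using semisimple_ring_quotient_iff[OF ideal_jacobson] by blast
  moreover have "T_nilpotent_for_right R (jacobson R)"
    using T_nilpotent_jacobson_if_annihilating[OF IJ]
      rev_prod_mem_if_right_perfect_quotient[OF I perfect(1)]
      rev_prod_mem_if_right_perfect_quotient[OF J perfect(2)] by blast
  ultimately show ?thesis unfolding right_perfect_def by blast
qed

end

theorem theorem3p1:
  fixes R :: "('a, 'b) ring_scheme"
  assumes "ring R"
    and "\<one>\<^bsub>R\<^esub> \<noteq> \<zero>\<^bsub>R\<^esub>"
    and "right_almost_perfect R"
    and "\<not> prime_ring R"
  shows "right_perfect R"
  using ring.right_perfect_if_right_almost_perfect_not_prime[OF assms(1,3,4)] .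

end
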